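(* Let $N_1=(S_1,T_1,F_1,M_{0,1},\ell)$ and $N_2=(S_2,T_2,F_2,M_{0,2},\ell_2)$ be two Petri nets, $N_2$ being plain. Then $N_1$ and $N_2$ are branching ST-bisimilar (with explicit divergence) iff they are branching split bisimilar (with explicit divergence).
   Context: Fix visible actions $\mathrm{Act}$ and $\tau\notin\mathrm{Act}$. A Petri net $(S,T,F,M_0,\ell)$ has disjoint $S,T$, $F:(S\times T)\cup(T\times S)\to\mathbb N$, $M_0\in\mathbb N^S$, $\ell:T\to\mathrm{Act}\cup\{\tau\}$; ${}^\bullet t(s)=F(s,t)$, $t^\bullet(s)=F(t,s)$; $M[t\rangle M'$ iff ${}^\bullet t\le M$ and $M'=M-{}^\bullet t+t^\bullet$. Plain: $\ell$ injective and never $\tau$. ST-LTS: states $(M,U)\in\mathbb N^S\times T^*$, initial $(M_0,\varepsilon)$; $(M,U)\xrightarrow{a^+}(M-{}^\bullet t,Ut)$ iff $\ell(t)=a\in\mathrm{Act}$ and $M[t\rangle$; $(M,U)\xrightarrow{a^{-n}}(M+t^\bullet,U^{-n})$ ($n>0$) iff the $n$-th element $t$ of $U$ has label $a$, $U^{-n}$ being $U$ with it removed; $(M,U)\xrightarrow{\tau}(M',U)$ iff $M[t\rangle M'$ with $\ell(t)=\tau$. Split LTS: states $(M,U)\in\mathbb N^S\times\mathbb N^T$, initial $(M_0,\emptyset)$; $(M,U)\xrightarrow{a^+}(M-{}^\bullet t,U+\{t\})$ iff $\ell(t)=a\in\mathrm{Act}$ and $M[t\rangle$; $(M,U)\xrightarrow{a^-}(M+t^\bullet,U-\{t\})$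 iff $t\in U$ and $\ell(t)=a$; $(M,U)\xrightarrow{\tau}(M',U)$ iff $M[t\rangle M'$ with $\ell(t)=\tau$. For LTSs: $\Rightarrow$ is the reflexive transitive closure of $\xrightarrow{\tau}$; $\xrightarrow{(\alpha)}$ means $\xrightarrow{\alpha}$ or (if $\alpha=\tau$) equality. A branching bisimulation is a relation $\mathcal B$ relating initial states such that if $\mathfrak M_1\mathcal B\mathfrak M_2$ and $\mathfrak M_1\xrightarrow{\alpha}\mathfrak M_1'$ then $\mathfrak M_2\Rightarrow\mathfrak M_2^\dagger\xrightarrow{(\alpha)}\mathfrak M_2'$ with $\mathfrak M_1\mathcal B\mathfrak M_2^\dagger$, $\mathfrak M_1'\mathcal B\mathfrak M_2'$, and symmetrically. It is with explicit divergence if moreover: if $\mathfrak M_1\mathcal B\mathfrak M_2$ and there is an infinite $\tau$-sequence from $\mathfrak M_1$ all of whose states are related to $\mathfrak M_2$, then there is an infinite $\tau$-sequence from $\mathfrak M_2$ with every state of the first related to every state of the second, and symmetrically. Two nets are branching ST-bisimilar (resp. branching split bisimilar), possibly with explicit divergence, iff such a relation exists between their ST-LTSs (resp. split LTSs). *)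

theory Defs
  imports Main "HOL-Library.Multiset"
begin

text \<open>Places live in type 's, transitions in type 't (so S and T are
  automatically disjoint); the actual place/transition sets are the carriers S and T.
  Labels are 'a option: Some a is a visible action a, None is tau.\<close>

record ('s, 't, 'a) pnet =
  places  :: "'s set"
  trans   :: "'t set"
  flow_st :: "'s \<Rightarrow> 't \<Rightarrow> nat"
  flow_ts :: "'t \<Rightarrow> 's \<Rightarrow> nat"
  init    :: "'s \<Rightarrow> nat"
  lab     :: "'t \<Rightarrow> 'a option"

definition petri_net :: "('s, 't, 'a) pnet \<Rightarrow> bool" where
  "petri_net N \<longleftrightarrow>
     (\<forall>s t. flow_st N s t \<noteq> 0 \<longrightarrow> s \<in> places N \<and> t \<in> trans N) \<and>
     (\<forall>t s. flow_ts N t s \<noteq> 0 \<longrightarrow> s \<in> places N \<and> t \<in> trans N) \<and>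
     (\<forall>s. init N s \<noteq> 0 \<longrightarrow> s \<in> places N)"

definition preset :: "('s, 't, 'a) pnet \<Rightarrow> 't \<Rightarrow> 's \<Rightarrow> nat" where
  "preset N t = (\<lambda>s. flow_st N s t)"

definition postset :: "('s, 't, 'a) pnet \<Rightarrow> 't \<Rightarrow> 's \<Rightarrow> nat" where
  "postset N t = (\<lambda>s. flow_ts N t s)"

definition enabled :: "('s, 't, 'a) pnet \<Rightarrow> ('s \<Rightarrow> nat) \<Rightarrow> 't \<Rightarrow> bool" where
  "enabled N M t \<longleftrightarrow> t \<in> trans N \<and> (\<forall>s. preset N t s \<le> M s)"

definition plain :: "('s, 't, 'a) pnet \<Rightarrow> bool" where
  "plain N \<longleftrightarrow> inj_on (lab N) (trans N) \<and> (\<forall>t \<in> trans N. lab N t \<noteq> None)"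

datatype 'a st_label = STPlus 'a | STMinus 'a nat | STTau
datatype 'a split_label = SPPlus 'a | SPMinus 'a | SPTau

text \<open>ST-LTS: states (M, U) with U a sequence of transitions.  Positions in U are
  1-based as in the paper: the n-th element is U ! (n - 1).\<close>

definition st_step :: "('s, 't, 'a) pnet \<Rightarrow> ('s \<Rightarrow> nat) \<times> 't list \<Rightarrow> 'a st_label
                       \<Rightarrow> ('s \<Rightarrow> nat) \<times> 't list \<Rightarrow> bool" where
  "st_step N st \<alpha> st' \<longleftrightarrow> (case (st, st') of ((M, U), (M', U')) \<Rightarrow>
     (case \<alpha> of
        STPlus a \<Rightarrow> (\<exists>t. lab N t = Some a \<and> enabled N M t \<and>
                        M' = (\<lambda>s. M s - preset N t s) \<and> U' = U @ [t])
      | STMinus a n \<Rightarrow> (0 < n \<and> n \<le> length U \<and> lab N (U ! (n - 1)) = Some a \<and>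
                        M' = (\<lambda>s. M s + postset N (U ! (n - 1)) s) \<and>
                        U' = take (n - 1) U @ drop n U)
      | STTau \<Rightarrow> (\<exists>t. lab N t = None \<and> enabled N M t \<and>
                        M' = (\<lambda>s. M s - preset N t s + postset N t s) \<and> U' = U)))"

definition st_init :: "('s, 't, 'a) pnet \<Rightarrow> ('s \<Rightarrow> nat) \<times> 't list" where
  "st_init N = (init N, [])"

definition split_step :: "('s, 't, 'a) pnet \<Rightarrow> ('s \<Rightarrow> nat) \<times> 't multiset \<Rightarrow> 'a split_label
                       \<Rightarrow> ('s \<Rightarrow> nat) \<times> 't multiset \<Rightarrow> bool" where
  "split_step N st \<alpha> st' \<longleftrightarrow> (case (st, st') of ((M, U), (M', U')) \<Rightarrow>
     (case \<alpha> of
        SPPlus a \<Rightarrow> (\<exists>t. lab N t = Some a \<and> enabled N M t \<and>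
                        M' = (\<lambda>s. M s - preset N t s) \<and> U' = U + {#t#})
      | SPMinus a \<Rightarrow> (\<exists>t. t \<in># U \<and> lab N t = Some a \<and>
                        M' = (\<lambda>s. M s + postset N t s) \<and> U' = U - {#t#})
      | SPTau \<Rightarrow> (\<exists>t. lab N t = None \<and> enabled N M t \<and>
                        M' = (\<lambda>s. M s - preset N t s + postset N t s) \<and> U' = U)))"

definition split_init :: "('s, 't, 'a) pnet \<Rightarrow> ('s \<Rightarrow> nat) \<times> 't multiset" where
  "split_init N = (init N, {#})"

definition bb_transfer ::
  "('p \<Rightarrow> 'l \<Rightarrow> 'p \<Rightarrow> bool) \<Rightarrow> ('q \<Rightarrow> 'l \<Rightarrow> 'q \<Rightarrow> bool) \<Rightarrow> 'l
   \<Rightarrow> ('p \<Rightarrow> 'q \<Rightarrow> bool) \<Rightarrow> bool" where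
  "bb_transfer step1 step2 tau B \<longleftrightarrow>
     (\<forall>p q \<alpha> p'. B p q \<and> step1 p \<alpha> p' \<longrightarrow>
        (\<exists>qd q'. (\<lambda>x y. step2 x tau y)\<^sup>*\<^sup>* q qd \<and>
                 (step2 qd \<alpha> q' \<or> (\<alpha> = tau \<and> q' = qd)) \<and>
                 B p qd \<and> B p' q'))"

definition branching_bisim ::
  "('p \<Rightarrow> 'l \<Rightarrow> 'p \<Rightarrow> bool) \<Rightarrow> 'p \<Rightarrow> ('q \<Rightarrow> 'l \<Rightarrow> 'q \<Rightarrow> bool) \<Rightarrow> 'q \<Rightarrow> 'l
   \<Rightarrow> ('p \<Rightarrow> 'q \<Rightarrow> bool) \<Rightarrow> bool" where
  "branching_bisim step1 i1 step2 i2 tau B \<longleftrightarrow>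
     B i1 i2 \<and> bb_transfer step1 step2 tau B \<and>
     bb_transfer step2 step1 tau (\<lambda>q p. B p q)"

definition div_transfer ::
  "('p \<Rightarrow> 'l \<Rightarrow> 'p \<Rightarrow> bool) \<Rightarrow> ('q \<Rightarrow> 'l \<Rightarrow> 'q \<Rightarrow> bool) \<Rightarrow> 'l
   \<Rightarrow> ('p \<Rightarrow> 'q \<Rightarrow> bool) \<Rightarrow> bool" where
  "div_transfer step1 step2 tau B \<longleftrightarrow>
     (\<forall>p q f. B p q \<and> f 0 = p \<and> (\<forall>i. step1 (f i) tau (f (Suc i))) \<and> (\<forall>i. B (f i) q)
        \<longrightarrow> (\<exists>g. g 0 = q \<and> (\<forall>j. step2 (g j) tau (g (Suc j))) \<and>
                 (\<forall>i j. B (f i) (g j))))"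

definition explicit_divergence ::
  "('p \<Rightarrow> 'l \<Rightarrow> 'p \<Rightarrow> bool) \<Rightarrow> ('q \<Rightarrow> 'l \<Rightarrow> 'q \<Rightarrow> bool) \<Rightarrow> 'l
   \<Rightarrow> ('p \<Rightarrow> 'q \<Rightarrow> bool) \<Rightarrow> bool" where
  "explicit_divergence step1 step2 tau B \<longleftrightarrow>
     div_transfer step1 step2 tau B \<and> div_transfer step2 step1 tau (\<lambda>q p. B p q)"

definition branching_ST_bisimilar ::
  "('s1, 't1, 'a) pnet \<Rightarrow> ('s2, 't2, 'a) pnet \<Rightarrow> bool" where
  "branching_ST_bisimilar N1 N2 \<longleftrightarrow>
     (\<exists>B. branching_bisim (st_step N1) (st_init N1) (st_step N2) (st_init N2) STTau B)"

definition branching_ST_bisimilar_div ::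
  "('s1, 't1, 'a) pnet \<Rightarrow> ('s2, 't2, 'a) pnet \<Rightarrow> bool" where
  "branching_ST_bisimilar_div N1 N2 \<longleftrightarrow>
     (\<exists>B. branching_bisim (st_step N1) (st_init N1) (st_step N2) (st_init N2) STTau B \<and>
          explicit_divergence (st_step N1) (st_step N2) STTau B)"

definition branching_split_bisimilar ::
  "('s1, 't1, 'a) pnet \<Rightarrow> ('s2, 't2, 'a) pnet \<Rightarrow> bool" where
  "branching_split_bisimilar N1 N2 \<longleftrightarrow>
     (\<exists>B. branching_bisim (split_step N1) (split_init N1) (split_step N2) (split_init N2) SPTau B)"

definition branching_split_bisimilar_div ::
  "('s1, 't1, 'a) pnet \<Rightarrow> ('s2, 't2, 'a) pnet \<Rightarrow> bool" where
  "branching_split_bisimilar_div N1 N2 \<longleftrightarrow>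
     (\<exists>B. branching_bisim (split_step N1) (split_init N1) (split_step N2) (split_init N2) SPTau B \<and>
          explicit_divergence (split_step N1) (split_step N2) SPTau B)"

end

theory Submission
  imports Defs
begin

text \<open>Sending an ST-state (M, U) to the split state (M, mset U), and an ST-label to the
  split label obtained by forgetting the position n of an ending action, is a functional
  bisimulation from the ST-LTS of a net onto its split LTS; hence the image of a
  branching ST-bisimulation is a branching split bisimulation.
  Conversely, a branching split bisimulation B is lifted to the pairs of ST-states whose
  images are B-related and whose sequences of running transitions carry the same labels
  position by position. The only delicate case is the end of the n-th running action:
  the split step of N2 answering it removes some transition with the right label, and
  since N2 is plain this is the n-th running transition of N2.
  Finally, a plain net has no \<tau>-steps at all, so a related state of N1 can never diverge
  (its divergence could not be matched), and both divergence clauses hold vacuously.\<close>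

section \<open>Branching bisimulations under projections\<close>

definition rel_image :: "('p \<Rightarrow> 'p') \<Rightarrow> ('q \<Rightarrow> 'q') \<Rightarrow> ('p \<Rightarrow> 'q \<Rightarrow> bool) \<Rightarrow> 'p' \<Rightarrow> 'q' \<Rightarrow> bool" where
  "rel_image \<pi>1 \<pi>2 B p q \<longleftrightarrow> (\<exists>x y. B x y \<and> \<pi>1 x = p \<and> \<pi>2 y = q)"

lemma rel_image_converse: "(\<lambda>q p. rel_image \<pi>1 \<pi>2 B p q) = rel_image \<pi>2 \<pi>1 (\<lambda>y x. B x y)"
  unfolding rel_image_def by blast

lemma rtranclp_image:
  assumes "\<And>x y. R x y \<Longrightarrow> R' (\<pi> x) (\<pi> y)" and "R\<^sup>*\<^sup>* x y"
  shows "R'\<^sup>*\<^sup>* (\<pi> x) (\<pi> y)"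
  using assms(2) by induction (auto intro: rtranclp.rtrancl_into_rtrancl assms(1))

lemma bb_transfer_rel_image:
  assumes lift: "\<And>x \<beta> p'. step1' (\<pi>1 x) \<beta> p' \<Longrightarrow> \<exists>\<alpha> x'. step1 x \<alpha> x' \<and> f \<alpha> = \<beta> \<and> \<pi>1 x' = p'"
    and proj: "\<And>y \<alpha> y'. step2 y \<alpha> y' \<Longrightarrow> step2' (\<pi>2 y) (f \<alpha>) (\<pi>2 y')"
    and tau: "f tau = tau'"
    and transfer: "bb_transfer step1 step2 tau B"
  shows "bb_transfer step1' step2' tau' (rel_image \<pi>1 \<pi>2 B)"
  unfolding bb_transfer_def
proof (intro allI impI, elim conjE)
  fix p q \<beta> p'
  assume "rel_image \<pi>1 \<pi>2 B p q" and "step1' p \<beta> p'"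
  then obtain x y where xy: "B x y" "\<pi>1 x = p" "\<pi>2 y = q"
    and "step1' (\<pi>1 x) \<beta> p'" by (auto simp: rel_image_def)
  then obtain \<alpha> x' where x': "step1 x \<alpha> x'" "f \<alpha> = \<beta>" "\<pi>1 x' = p'"
    using lift by blast
  with transfer xy obtain yd y' where
    taus: "(\<lambda>x y. step2 x tau y)\<^sup>*\<^sup>* y yd"
    and answer: "step2 yd \<alpha> y' \<or> (\<alpha> = tau \<and> y' = yd)"
    and related: "B x yd" "B x' y'"
    unfolding bb_transfer_def by blast
  have "step2' (\<pi>2 u) tau' (\<pi>2 v)" if "step2 u tau v" for u v
    using proj[OF that] tau by simp
  then have "(\<lambda>x y. step2' x tau' y)\<^sup>*\<^sup>* q (\<pi>2 yd)"
    using rtranclp_image[of "\<lambda>x y. step2 x tau y" "\<lambda>x y. step2' x tau' y" \<pi>2, OF _ taus] xy(3)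
    by blast
  moreover have "step2' (\<pi>2 yd) \<beta> (\<pi>2 y') \<or> (\<beta> = tau' \<and> \<pi>2 y' = \<pi>2 yd)"
    using answer proj x'(2) tau by blast
  moreover have "rel_image \<pi>1 \<pi>2 B p (\<pi>2 yd)" "rel_image \<pi>1 \<pi>2 B p' (\<pi>2 y')"
    using related xy(2) x'(3) unfolding rel_image_def by blast+
  ultimately show "\<exists>qd q'. (\<lambda>x y. step2' x tau' y)\<^sup>*\<^sup>* q qd \<and>
      (step2' qd \<beta> q' \<or> \<beta> = tau' \<and> q' = qd) \<and> rel_image \<pi>1 \<pi>2 B p qd \<and> rel_image \<pi>1 \<pi>2 B p' q'"
    by blast
qed

lemma branching_bisim_rel_image:
  assumes bisim: "branching_bisim step1 i1 step2 i2 tau B"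
    and lift1: "\<And>x \<beta> p'. step1' (\<pi>1 x) \<beta> p' \<Longrightarrow> \<exists>\<alpha> x'. step1 x \<alpha> x' \<and> f \<alpha> = \<beta> \<and> \<pi>1 x' = p'"
    and lift2: "\<And>y \<beta> q'. step2' (\<pi>2 y) \<beta> q' \<Longrightarrow> \<exists>\<alpha> y'. step2 y \<alpha> y' \<and> f \<alpha> = \<beta> \<and> \<pi>2 y' = q'"
    and proj1: "\<And>x \<alpha> x'. step1 x \<alpha> x' \<Longrightarrow> step1' (\<pi>1 x) (f \<alpha>) (\<pi>1 x')"
    and proj2: "\<And>y \<alpha> y'. step2 y \<alpha> y' \<Longrightarrow> step2' (\<pi>2 y) (f \<alpha>) (\<pi>2 y')"
    and tau: "f tau = tau'"
  shows "branching_bisim step1' (\<pi>1 i1) step2' (\<pi>2 i2) tau' (rel_image \<pi>1 \<pi>2 B)"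
proof -
  from bisim have init: "B i1 i2" and forth_transfer: "bb_transfer step1 step2 tau B"
    and back_transfer: "bb_transfer step2 step1 tau (\<lambda>y x. B x y)"
    unfolding branching_bisim_def by auto
  have "rel_image \<pi>1 \<pi>2 B (\<pi>1 i1) (\<pi>2 i2)"
    using init unfolding rel_image_def by blast
  moreover have "bb_transfer step1' step2' tau' (rel_image \<pi>1 \<pi>2 B)"
    using bb_transfer_rel_image[of step1' \<pi>1 step1 f step2 step2' \<pi>2 tau tau' B]
      lift1 proj2 tau forth_transfer
    by blast
  moreover have "bb_transfer step2' step1' tau' (rel_image \<pi>2 \<pi>1 (\<lambda>y x. B x y))"
    using bb_transfer_rel_image[of step2' \<pi>2 step2 f step1 step1' \<pi>1 tau tau' "\<lambda>y x. B x y"]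
      lift2 proj1 tau back_transfer
    by blast
  ultimately show ?thesis
    unfolding branching_bisim_def rel_image_converse by blast
qed

lemma rtranclp_no_steps: "(\<And>x y. \<not> R x y) \<Longrightarrow> R\<^sup>*\<^sup>* x y \<Longrightarrow> x = y"
  by (erule converse_rtranclpE) auto

lemma div_transfer_from_tau_free:
  "(\<And>p p'. \<not> step1 p tau p') \<Longrightarrow> div_transfer step1 step2 tau B"
  unfolding div_transfer_def by blast

lemma div_transfer_if_no_divergence:
  "(\<And>p q f. B p q \<Longrightarrow> f 0 = p \<Longrightarrow> \<forall>i. step1 (f i) tau (f (Suc i)) \<Longrightarrow> False)
   \<Longrightarrow> div_transfer step1 step2 tau B"
  unfolding div_transfer_def by blast

lemma no_divergence_against_tau_free:
  assumes transfer: "bb_transfer step1 step2 tau B" and div: "div_transfer step1 step2 tau B"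
    and tau_free: "\<And>q q'. \<not> step2 q tau q'"
    and related: "B (f 0) q" and path: "\<forall>i. step1 (f i) tau (f (Suc i))"
  shows False
proof -
  have stays: "B (f i) q" for i
  proof (induction i)
    case (Suc i)
    have "B (f i) q \<and> step1 (f i) tau (f (Suc i))" using Suc path by blast
    then obtain qd q' where taus: "(\<lambda>x y. step2 x tau y)\<^sup>*\<^sup>* q qd"
      and answer: "step2 qd tau q' \<or> q' = qd" and "B (f (Suc i)) q'"
      using transfer[unfolded bb_transfer_def, rule_format, of "f i" q tau "f (Suc i)"] by blast
    moreover have "qd = q" using rtranclp_no_steps[OF _ taus] tau_free by blast
    moreover have "q' = qd" using answer tau_free by blast
    ultimately show ?case by simp
  qed (rule related)
  then have "B (f 0) q \<and> f 0 = f 0 \<and> (\<forall>i. step1 (f i) tau (f (Suc i))) \<and> (\<forall>i. B (f i) q)"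
    using path by blast
  then obtain g where "\<forall>j. step2 (g j) tau (g (Suc j))"
    using div[unfolded div_transfer_def, rule_format, of "f 0" q f] by blast
  then show False using tau_free by blast
qed

section \<open>ST-steps and split steps\<close>

fun split_label_of :: "'a st_label \<Rightarrow> 'a split_label" where
  "split_label_of (STPlus a) = SPPlus a"
| "split_label_of (STMinus a n) = SPMinus a"
| "split_label_of STTau = SPTau"

lemma split_label_of_eq_iff [simp]:
  "split_label_of \<alpha> = SPTau \<longleftrightarrow> \<alpha> = STTau"
  "split_label_of \<alpha> = SPPlus a \<longleftrightarrow> \<alpha> = STPlus a"
  by (cases \<alpha>; simp)+

definition split_of :: "('s \<Rightarrow> nat) \<times> 't list \<Rightarrow> ('s \<Rightarrow> nat) \<times> 't multiset" where
  "split_of x = (fst x, mset (snd x))"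

lemma split_of_st_init: "split_of (st_init N) = split_init N"
  by (simp add: split_of_def st_init_def split_init_def)

lemma mset_remove_nth:
  assumes "i < length U"
  shows "mset (take i U @ drop (Suc i) U) = mset U - {#U ! i#}"
proof -
  have "mset U = mset (take i U @ U ! i # drop (Suc i) U)"
    using id_take_nth_drop[OF assms] by (metis)
  then show ?thesis by simp
qed

lemma st_step_split_step:
  assumes "st_step N x \<alpha> x'"
  shows "split_step N (split_of x) (split_label_of \<alpha>) (split_of x')"
proof (cases \<alpha>)
  case (STMinus a n)
  with assms obtain M U where x: "x = (M, U)" and n: "0 < n" "n \<le> length U"
    and l: "lab N (U ! (n - 1)) = Some a"
    and x': "x' = (\<lambda>s. M s + postset N (U ! (n - 1)) s, take (n - 1) U @ drop n U)"
    by (cases x) (auto simp: st_step_def)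
  have "mset (take (n - 1) U @ drop n U) = mset U - {#U ! (n - 1)#}"
    using mset_remove_nth[of "n - 1" U] n by simp
  moreover have "U ! (n - 1) \<in># mset U" using n by simp
  ultimately show ?thesis
    using STMinus x x' l unfolding split_step_def split_of_def by auto
qed (use assms in \<open>auto simp: st_step_def split_step_def split_of_def split: prod.splits\<close>)

lemma split_step_lift:
  assumes "split_step N (split_of x) \<beta> q'"
  shows "\<exists>\<alpha> x'. st_step N x \<alpha> x' \<and> split_label_of \<alpha> = \<beta> \<and> split_of x' = q'"
proof -
  obtain M U where x: "x = (M, U)" by fastforce
  show ?thesis
  proof (cases \<beta>)
    case (SPMinus a)
    with assms x obtain t where t: "t \<in># mset U" "lab N t = Some a"
      and q': "q' = (\<lambda>s. M s + postset N t s, mset U - {#t#})"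
      by (cases q') (auto simp: split_step_def split_of_def)
    then obtain i where i: "i < length U" "U ! i = t" by (metis in_set_conv_nth set_mset_mset)
    have "st_step N x (STMinus a (Suc i)) (fst q', take i U @ drop (Suc i) U)"
      using i t q' x by (auto simp: st_step_def)
    moreover have "split_of (fst q', take i U @ drop (Suc i) U) = q'"
      using mset_remove_nth[OF i(1)] i q' by (simp add: split_of_def)
    ultimately show ?thesis using SPMinus by force
  next
    case (SPPlus a)
    with assms x obtain t where "lab N t = Some a" "enabled N M t"
      and q': "q' = (\<lambda>s. M s - preset N t s, mset U + {#t#})"
      by (cases q') (auto simp: split_step_def split_of_def)
    then have "st_step N x (STPlus a) (fst q', U @ [t]) \<and> split_of (fst q', U @ [t]) = q'"
      using x by (auto simp: st_step_def split_of_def)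
    then show ?thesis using SPPlus by force
  next
    case SPTau
    with assms x obtain t where "lab N t = None" "enabled N M t"
      and q': "q' = (\<lambda>s. M s - preset N t s + postset N t s, mset U)"
      by (cases q') (auto simp: split_step_def split_of_def)
    then have "st_step N x STTau (fst q', U) \<and> split_of (fst q', U) = q'"
      using x by (auto simp: st_step_def split_of_def)
    then show ?thesis using SPTau by force
  qed
qed

lemma split_tau_stepD:
  "split_step N (M, V) SPTau (M', V') \<Longrightarrow> V' = V \<and> st_step N (M, U) STTau (M', U)"
  by (auto simp: st_step_def split_step_def)

lemma split_tau_steps_lift:
  "(\<lambda>p p'. split_step N p SPTau p')\<^sup>*\<^sup>* (split_of x) q \<Longrightarrow>
   \<exists>x'. (\<lambda>x x'. st_step N x STTau x')\<^sup>*\<^sup>* x x' \<and> split_of x' = q \<and> snd x' = snd x"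
proof (induction rule: rtranclp_induct)
  case (step q q')
  then obtain x' where taus: "(\<lambda>x x'. st_step N x STTau x')\<^sup>*\<^sup>* x x'"
    and q: "split_of x' = q" and running: "snd x' = snd x" by blast
  have "split_step N (fst x', mset (snd x')) SPTau (fst q', snd q')"
    using step.hyps(2) q by (simp add: split_of_def)
  then have "snd q' = mset (snd x') \<and> st_step N (fst x', snd x') STTau (fst q', snd x')"
    by (rule split_tau_stepD)
  then have "(\<lambda>x x'. st_step N x STTau x')\<^sup>*\<^sup>* x (fst q', snd x') \<and> split_of (fst q', snd x') = q'"
    using taus rtranclp.rtrancl_into_rtrancl[OF taus, of "(fst q', snd x')"]
    by (simp add: split_of_def prod_eq_iff)
  then show ?case using running by fastforce
qed blast

lemma split_tau_path_lift:
  assumes start: "f 0 = split_of x" and path: "\<forall>i. split_step N (f i) SPTau (f (Suc i))"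
  shows "\<exists>h. h 0 = x \<and> (\<forall>i. st_step N (h i) STTau (h (Suc i)))"
proof -
  have step: "split_step N (fst (f i), snd (f i)) SPTau (fst (f (Suc i)), snd (f (Suc i)))" for i
    using path by simp
  have running: "snd (f i) = mset (snd x)" for i
  proof (induction i)
    case 0 then show ?case using start by (simp add: split_of_def)
  next
    case (Suc i) then show ?case using split_tau_stepD[OF step] by simp
  qed
  have "st_step N (fst (f i), snd x) STTau (fst (f (Suc i)), snd x)" for i
    using split_tau_stepD[OF step] by blast
  moreover have "(fst (f 0), snd x) = x" using start by (simp add: split_of_def)
  ultimately show ?thesis by (intro exI[of _ "\<lambda>i. (fst (f i), snd x)"]) simp
qed

lemma plain_st_tau_free: "plain N \<Longrightarrow> \<not> st_step N x STTau x'"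
  by (auto simp: st_step_def plain_def enabled_def split: prod.splits)

lemma plain_split_tau_free: "plain N \<Longrightarrow> \<not> split_step N p SPTau p'"
  by (auto simp: split_step_def plain_def enabled_def split: prod.splits)

section \<open>From ST-bisimulations to split bisimulations\<close>

lemma branching_bisim_split_of:
  assumes "branching_bisim (st_step N1) (st_init N1) (st_step N2) (st_init N2) STTau B"
  shows "branching_bisim (split_step N1) (split_init N1) (split_step N2) (split_init N2) SPTau
           (rel_image split_of split_of B)"
  using branching_bisim_rel_image[of "st_step N1" "st_init N1" "st_step N2" "st_init N2" STTau B
      "split_step N1" split_of split_label_of "split_step N2" split_of SPTau,
      OF assms split_step_lift split_step_lift st_step_split_step st_step_split_step]
  unfolding split_of_st_init by simp

lemma explicit_divergence_split_of:
  assumes plain: "plain N2"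
    and bisim: "branching_bisim (st_step N1) (st_init N1) (st_step N2) (st_init N2) STTau B"
    and div: "explicit_divergence (st_step N1) (st_step N2) STTau B"
  shows "explicit_divergence (split_step N1) (split_step N2) SPTau (rel_image split_of split_of B)"
  unfolding explicit_divergence_def
proof
  show "div_transfer (split_step N1) (split_step N2) SPTau (rel_image split_of split_of B)"
  proof (rule div_transfer_if_no_divergence)
    fix p q f
    assume "rel_image split_of split_of B p q" and "f 0 = p"
      and path: "\<forall>i. split_step N1 (f i) SPTau (f (Suc i))"
    then obtain x y where "B x y" and "f 0 = split_of x" by (auto simp: rel_image_def)
    moreover obtain h where "h 0 = x" and "\<forall>i. st_step N1 (h i) STTau (h (Suc i))"
      using split_tau_path_lift[OF \<open>f 0 = split_of x\<close> path] by blast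
    ultimately show False
      using no_divergence_against_tau_free[of "st_step N1" "st_step N2" STTau B h y]
        bisim div plain_st_tau_free[OF plain]
      unfolding branching_bisim_def explicit_divergence_def by blast
  qed
  show "div_transfer (split_step N2) (split_step N1) SPTau
      (\<lambda>q p. rel_image split_of split_of B p q)"
    using div_transfer_from_tau_free plain_split_tau_free[OF plain] by metis
qed

section \<open>From split bisimulations to ST-bisimulations\<close>

fun st_labels_update :: "'a st_label \<Rightarrow> 'a option list \<Rightarrow> 'a option list" where
  "st_labels_update (STPlus a) ls = ls @ [Some a]"
| "st_labels_update (STMinus a n) ls = take (n - 1) ls @ drop n ls"
| "st_labels_update STTau ls = ls"

lemma st_step_labels:
  "st_step N x \<alpha> x' \<Longrightarrow> map (lab N) (snd x') = st_labels_update \<alpha> (map (lab N) (snd x))"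
  by (cases \<alpha>) (auto simp: st_step_def take_map drop_map split: prod.splits)

lemma st_step_running_trans:
  "st_step N x \<alpha> x' \<Longrightarrow> set (snd x) \<subseteq> trans N \<Longrightarrow> set (snd x') \<subseteq> trans N"
  by (cases \<alpha>)
    (auto simp: st_step_def enabled_def split: prod.splits dest: in_set_takeD in_set_dropD)

lemma st_minus_step_by_labels:
  assumes labels: "map (lab N1) (snd x) = map (lab N2) (snd y)"
    and step: "st_step N1 x (STMinus a n) x'"
  shows "\<exists>y'. st_step N2 y (STMinus a n) y'"
proof -
  from step have "0 < n" "n \<le> length (snd x)" "lab N1 (snd x ! (n - 1)) = Some a"
    by (auto simp: st_step_def split: prod.splits)
  moreover from labels have "length (snd x) = length (snd y)" by (metis length_map)
  moreover have "lab N2 (snd y ! (n - 1)) = lab N1 (snd x ! (n - 1))"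
    using labels calculation by (metis diff_less less_le_trans less_one nth_map)
  ultimately show ?thesis by (cases y) (auto simp: st_step_def)
qed

lemma st_minus_step_deterministic:
  "st_step N y (STMinus a n) y' \<Longrightarrow> st_step N y (STMinus a n) y'' \<Longrightarrow> y' = y''"
  by (auto simp: st_step_def split: prod.splits)

lemma plain_split_minus_step:
  assumes plain: "plain N" and running: "set (snd y) \<subseteq> trans N"
    and st: "st_step N y (STMinus a n) y'" and split: "split_step N (split_of y) (SPMinus a) q'"
  shows "q' = split_of y'"
proof -
  obtain M U where y: "y = (M, U)" by fastforce
  with st have n: "0 < n" "n \<le> length U" and l: "lab N (U ! (n - 1)) = Some a"
    and y': "y' = (\<lambda>s. M s + postset N (U ! (n - 1)) s, take (n - 1) U @ drop n U)"
    by (auto simp: st_step_def)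
  from split y obtain t where t: "t \<in># mset U" "lab N t = Some a"
    and q': "q' = (\<lambda>s. M s + postset N t s, mset U - {#t#})"
    by (cases q') (auto simp: split_step_def split_of_def)
  have "U ! (n - 1) \<in> trans N" "t \<in> trans N" using running y n t by auto
  then have "t = U ! (n - 1)" using plain l t unfolding plain_def inj_on_def by metis
  moreover have "mset (take (n - 1) U @ drop n U) = mset U - {#U ! (n - 1)#}"
    using mset_remove_nth[of "n - 1" U] n by simp
  ultimately show ?thesis using q' y' by (simp add: split_of_def)
qed

text \<open>The last conjunct holds in every reachable state; it is what lets plainness of
  N2 identify a running transition of N2 by its label.\<close>

definition st_lift_rel ::
  "('s1, 't1, 'a) pnet \<Rightarrow> ('s2, 't2, 'a) pnet
   \<Rightarrow> (('s1 \<Rightarrow> nat) \<times> 't1 multiset \<Rightarrow> ('s2 \<Rightarrow> nat) \<times> 't2 multiset \<Rightarrow> bool)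
   \<Rightarrow> ('s1 \<Rightarrow> nat) \<times> 't1 list \<Rightarrow> ('s2 \<Rightarrow> nat) \<times> 't2 list \<Rightarrow> bool" where
  "st_lift_rel N1 N2 B x y \<longleftrightarrow>
     B (split_of x) (split_of y) \<and> map (lab N1) (snd x) = map (lab N2) (snd y) \<and>
     set (snd y) \<subseteq> trans N2"

lemma st_lift_rel_step:
  assumes "st_lift_rel N1 N2 B x y" and "st_step N1 x \<alpha> x'" and "st_step N2 y \<alpha> y'"
    and "B (split_of x') (split_of y')"
  shows "st_lift_rel N1 N2 B x' y'"
  using assms st_step_labels[OF assms(2)] st_step_labels[OF assms(3)]
    st_step_running_trans[OF assms(3)]
  unfolding st_lift_rel_def by simp

lemma st_lift_rel_answer:
  assumes plain: "plain N2"
    and transfer: "bb_transfer (split_step N1) (split_step N2) SPTau B"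
    and rel: "st_lift_rel N1 N2 B x y" and step: "st_step N1 x \<alpha> x'"
  shows "(\<alpha> = STTau \<and> st_lift_rel N1 N2 B x' y) \<or>
         (\<exists>y'. st_step N2 y \<alpha> y' \<and> st_lift_rel N1 N2 B x' y')"
proof -
  from rel have related: "B (split_of x) (split_of y)"
    and labels: "map (lab N1) (snd x) = map (lab N2) (snd y)"
    and running: "set (snd y) \<subseteq> trans N2"
    unfolding st_lift_rel_def by auto
  obtain qd q' where taus: "(\<lambda>p p'. split_step N2 p SPTau p')\<^sup>*\<^sup>* (split_of y) qd"
    and answer: "split_step N2 qd (split_label_of \<alpha>) q' \<or> (split_label_of \<alpha> = SPTau \<and> q' = qd)"
    and related': "B (split_of x') q'"
    using transfer[unfolded bb_transfer_def, rule_format,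
        OF conjI[OF related st_step_split_step[OF step]]]
    by blast
  have "qd = split_of y" using rtranclp_no_steps[OF _ taus] plain_split_tau_free[OF plain] by blast
  with answer have answer: "split_step N2 (split_of y) (split_label_of \<alpha>) q' \<or>
      (\<alpha> = STTau \<and> q' = split_of y)" by simp
  show ?thesis
  proof (cases \<alpha>)
    case STTau
    then have "q' = split_of y" using answer plain_split_tau_free[OF plain] by auto
    moreover have "map (lab N1) (snd x') = map (lab N1) (snd x)"
      using st_step_labels[OF step] STTau by simp
    ultimately show ?thesis using STTau related' labels running unfolding st_lift_rel_def by simp
  next
    case (STPlus a)
    then obtain \<beta> y' where "st_step N2 y \<beta> y'" "split_label_of \<beta> = SPPlus a" "split_of y' = q'"
      using answer split_step_lift by fastforce
    then have y': "st_step N2 y \<alpha> y'" and "q' = split_of y'" using STPlus by auto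
    then have "st_lift_rel N1 N2 B x' y'" using st_lift_rel_step[OF rel step y'] related' by simp
    then show ?thesis using y' by blast
  next
    case (STMinus a n)
    then obtain y' where y': "st_step N2 y \<alpha> y'"
      using st_minus_step_by_labels[OF labels] step by blast
    then have "q' = split_of y'"
      using plain_split_minus_step[OF plain running] answer STMinus by auto
    then have "st_lift_rel N1 N2 B x' y'" using st_lift_rel_step[OF rel step y'] related' by simp
    then show ?thesis using y' by blast
  qed
qed

lemma bb_transfer_st_lift_rel:
  assumes "plain N2" and "bb_transfer (split_step N1) (split_step N2) SPTau B"
  shows "bb_transfer (st_step N1) (st_step N2) STTau (st_lift_rel N1 N2 B)"
  unfolding bb_transfer_def
proof (intro allI impI, elim conjE)
  fix x y \<alpha> x'
  assume "st_lift_rel N1 N2 B x y" and "st_step N1 x \<alpha> x'"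
  then have "(\<alpha> = STTau \<and> st_lift_rel N1 N2 B x' y) \<or>
      (\<exists>y'. st_step N2 y \<alpha> y' \<and> st_lift_rel N1 N2 B x' y')"
    using st_lift_rel_answer assms by blast
  then show "\<exists>yd y'. (\<lambda>p p'. st_step N2 p STTau p')\<^sup>*\<^sup>* y yd \<and>
      (st_step N2 yd \<alpha> y' \<or> \<alpha> = STTau \<and> y' = yd) \<and>
      st_lift_rel N1 N2 B x yd \<and> st_lift_rel N1 N2 B x' y'"
    using \<open>st_lift_rel N1 N2 B x y\<close> by blast
qed

lemma bb_transfer_st_lift_rel_converse:
  assumes plain: "plain N2"
    and forth_transfer: "bb_transfer (split_step N1) (split_step N2) SPTau B"
    and back_transfer: "bb_transfer (split_step N2) (split_step N1) SPTau (\<lambda>q p. B p q)"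
  shows "bb_transfer (st_step N2) (st_step N1) STTau (\<lambda>y x. st_lift_rel N1 N2 B x y)"
  unfolding bb_transfer_def
proof (intro allI impI, elim conjE)
  fix y x \<alpha> y'
  assume rel: "st_lift_rel N1 N2 B x y" and step: "st_step N2 y \<alpha> y'"
  then have related: "B (split_of x) (split_of y)"
    and labels: "map (lab N1) (snd x) = map (lab N2) (snd y)"
    unfolding st_lift_rel_def by auto
  show "\<exists>xd x'. (\<lambda>p p'. st_step N1 p STTau p')\<^sup>*\<^sup>* x xd \<and>
      (st_step N1 xd \<alpha> x' \<or> \<alpha> = STTau \<and> x' = xd) \<and>
      st_lift_rel N1 N2 B xd y \<and> st_lift_rel N1 N2 B x' y'"
  proof (cases \<alpha>)
    case STTau
    then show ?thesis using step plain_st_tau_free[OF plain] by blast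
  next
    case (STMinus a n)
    then obtain x' where x': "st_step N1 x \<alpha> x'"
      using st_minus_step_by_labels[OF labels[symmetric]] step by blast
    then obtain y'' where "st_step N2 y \<alpha> y''" and "st_lift_rel N1 N2 B x' y''"
      using st_lift_rel_answer[OF plain forth_transfer rel] STMinus by blast
    moreover have "y'' = y'"
      using st_minus_step_deterministic[of N2 y a n y'' y'] calculation(1) step STMinus by simp
    ultimately show ?thesis using rel x' by (intro exI[of _ x] exI[of _ x']) simp
  next
    case (STPlus a)
    obtain pd p' where taus: "(\<lambda>p p'. split_step N1 p SPTau p')\<^sup>*\<^sup>* (split_of x) pd"
      and answer: "split_step N1 pd (SPPlus a) p' \<or> (SPPlus a = SPTau \<and> p' = pd)"
      and related': "B pd (split_of y)" "B p' (split_of y')"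
      using back_transfer[unfolded bb_transfer_def, rule_format,
          OF conjI[OF related st_step_split_step[OF step]]]
        STPlus by (auto simp only: split_label_of.simps)
    obtain xd where xd: "(\<lambda>p p'. st_step N1 p STTau p')\<^sup>*\<^sup>* x xd"
        "split_of xd = pd" "snd xd = snd x"
      using split_tau_steps_lift[OF taus] by blast
    then obtain \<beta> x' where "st_step N1 xd \<beta> x'" "split_label_of \<beta> = SPPlus a" "split_of x' = p'"
      using answer split_step_lift by fastforce
    then have x': "st_step N1 xd \<alpha> x'" using STPlus by simp
    have "st_lift_rel N1 N2 B xd y" using rel related' xd unfolding st_lift_rel_def by simp
    moreover have "st_lift_rel N1 N2 B x' y'"
      using st_lift_rel_step[OF calculation x' step] related' \<open>split_of x' = p'\<close> by simp
    ultimately show ?thesis using xd(1) x' by (intro exI[of _ xd] exI[of _ x']) simp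
  qed
qed

lemma branching_bisim_st_lift_rel:
  assumes plain: "plain N2"
    and bisim: "branching_bisim (split_step N1) (split_init N1) (split_step N2) (split_init N2)
      SPTau B"
  shows "branching_bisim (st_step N1) (st_init N1) (st_step N2) (st_init N2)
      STTau (st_lift_rel N1 N2 B)"
proof -
  from bisim have init: "B (split_init N1) (split_init N2)"
    and forth_transfer: "bb_transfer (split_step N1) (split_step N2) SPTau B"
    and back_transfer: "bb_transfer (split_step N2) (split_step N1) SPTau (\<lambda>q p. B p q)"
    unfolding branching_bisim_def by auto
  have "st_lift_rel N1 N2 B (st_init N1) (st_init N2)"
    using init split_of_st_init[of N1] split_of_st_init[of N2]
    by (simp add: st_lift_rel_def st_init_def)
  then show ?thesis
    unfolding branching_bisim_def
    using bb_transfer_st_lift_rel[OF plain forth_transfer]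
      bb_transfer_st_lift_rel_converse[OF plain forth_transfer back_transfer]
    by blast
qed

lemma explicit_divergence_st_lift_rel:
  assumes plain: "plain N2"
    and bisim: "branching_bisim (split_step N1) (split_init N1) (split_step N2) (split_init N2)
      SPTau B"
    and div: "explicit_divergence (split_step N1) (split_step N2) SPTau B"
  shows "explicit_divergence (st_step N1) (st_step N2) STTau (st_lift_rel N1 N2 B)"
  unfolding explicit_divergence_def
proof
  show "div_transfer (st_step N1) (st_step N2) STTau (st_lift_rel N1 N2 B)"
  proof (rule div_transfer_if_no_divergence)
    fix x y f
    assume "st_lift_rel N1 N2 B x y" and "f 0 = x"
      and path: "\<forall>i. st_step N1 (f i) STTau (f (Suc i))"
    then have "B ((split_of \<circ> f) 0) (split_of y)" by (simp add: st_lift_rel_def)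
    moreover have "\<forall>i. split_step N1 ((split_of \<circ> f) i) SPTau ((split_of \<circ> f) (Suc i))"
      using path st_step_split_step by fastforce
    ultimately show False
      using no_divergence_against_tau_free[of "split_step N1" "split_step N2" SPTau B
          "split_of \<circ> f"]
        bisim div plain_split_tau_free[OF plain]
      unfolding branching_bisim_def explicit_divergence_def by blast
  qed
  show "div_transfer (st_step N2) (st_step N1) STTau (\<lambda>y x. st_lift_rel N1 N2 B x y)"
    using div_transfer_from_tau_free plain_st_tau_free[OF plain] by metis
qed

theorem proposition3p15:
  fixes N1 :: "('s1, 't1, 'a) pnet" and N2 :: "('s2, 't2, 'a) pnet"
  assumes "petri_net N1" and "petri_net N2" and "plain N2"
  shows "(branching_ST_bisimilar N1 N2 \<longleftrightarrow> branching_split_bisimilar N1 N2) \<and>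
         (branching_ST_bisimilar_div N1 N2 \<longleftrightarrow> branching_split_bisimilar_div N1 N2)"
proof
  show "branching_ST_bisimilar N1 N2 \<longleftrightarrow> branching_split_bisimilar N1 N2"
    unfolding branching_ST_bisimilar_def branching_split_bisimilar_def
    using branching_bisim_split_of branching_bisim_st_lift_rel[OF \<open>plain N2\<close>] by blast
  show "branching_ST_bisimilar_div N1 N2 \<longleftrightarrow> branching_split_bisimilar_div N1 N2"
    unfolding branching_ST_bisimilar_div_def branching_split_bisimilar_div_def
    using branching_bisim_split_of explicit_divergence_split_of[OF \<open>plain N2\<close>]
      branching_bisim_st_lift_rel[OF \<open>plain N2\<close>] explicit_divergence_st_lift_rel[OF \<open>plain N2\<close>]
    by blast
qed

end
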